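(* Let $g$ be a positive integer, let $l\ge1$, and let $(a,a+g)$ be a consecutive prospective prime pair with gap $g$ in $S_l$. Let $k>l+2$. For $0\le m\le P_k-1$, let $\mathring{n}^g_{S_k^{(m)}}$ be the number of pairs derived from $(a,a+g)$ in $S_k$ that lie in the subset $S_k^{(m)}$, i.e. the number of tuples $(m_{l+1},\dots,m_k)$ with $0\le m_j\le P_j-1$ and $m_k=m$ such that, with $M=\sum_{j=l+1}^k m_jP_{j-1}\#$, both $a+M$ and $a+g+M$ are coprime to $P_k\#$. Then for every $0\le m\le P_k-1$, \[\mathring{n}^g_{S_k^{(m)}}\ge \mathring{n}^g_{k-2}\,(P_{k-1}-4)=(P_{k-1}-4)\prod_{i=l+1}^{k-2}(P_i-2)\cdot\prod_{\substack{i=l+1\\ P_i\mid g}}^{k-2}\frac{P_i-1}{P_i-2}.\]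
   Context: $P_k$ denotes the $k$-th prime ($P_1=2$) and $P_k\#=\prod_{i=1}^kP_i$. $S_k=\{N\in\mathbb{N}:5\le N\le 4+P_k\#\}$ and, for $0\le m\le P_k-1$, $S_k^{(m)}=\{N: 5+mP_{k-1}\#\le N\le 4+(m+1)P_{k-1}\#\}$. A prospective prime in $S_k$ is an $N\in S_k$ coprime to $P_k\#$; prospective primes $a<b$ in $S_k$ are consecutive if no integer strictly between them is coprime to $P_k\#$; a consecutive prospective prime pair with gap $g$ is a pair $(a,a+g)$ of consecutive prospective primes. For $j>l$, $\mathring{n}^g_j=\prod_{i=l+1}^{j}(P_i-2)\prod_{l+1\le i\le j,\,P_i\mid g}\frac{P_i-1}{P_i-2}$. *)

theory Defs
  imports Complex_Main "HOL-Computational_Algebra.Primes" "HOL-Library.Infinite_Set" "HOL-Library.FuncSet"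
begin

text \<open>P k is the k-th prime, 1-indexed (P 1 = 2).\<close>
definition P :: "nat \<Rightarrow> nat" where
  "P k = enumerate {p. prime p} (k - 1)"

definition primorial :: "nat \<Rightarrow> nat" where
  "primorial k = (\<Prod>i\<in>{1..k}. P i)"

definition S :: "nat \<Rightarrow> nat set" where
  "S k = {5 .. 4 + primorial k}"

definition prospective :: "nat \<Rightarrow> nat \<Rightarrow> bool" where
  "prospective k N \<longleftrightarrow> N \<in> S k \<and> coprime N (primorial k)"

definition consec_pair :: "nat \<Rightarrow> nat \<Rightarrow> nat \<Rightarrow> bool" where
  "consec_pair k g a \<longleftrightarrow> 0 < g \<and> prospective k a \<and> prospective k (a + g) \<and>
     (\<forall>n. a < n \<and> n < a + g \<longrightarrow> \<not> coprime n (primorial k))"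

definition derived_count :: "nat \<Rightarrow> nat \<Rightarrow> nat \<Rightarrow> nat \<Rightarrow> nat \<Rightarrow> nat" where
  "derived_count l k g a m = card {ms \<in> (\<Pi>\<^sub>E j\<in>{l+1..k}. {..<P j}).
      ms k = m \<and>
      coprime (a + (\<Sum>j=l+1..k. ms j * primorial (j - 1))) (primorial k) \<and>
      coprime (a + g + (\<Sum>j=l+1..k. ms j * primorial (j - 1))) (primorial k)}"

definition nring :: "nat \<Rightarrow> nat \<Rightarrow> nat \<Rightarrow> real" where
  "nring l g j = (\<Prod>i\<in>{l+1..j}. real (P i) - 2) *
      (\<Prod>i\<in>{i. l+1 \<le> i \<and> i \<le> j \<and> P i dvd g}. (real (P i) - 1) / (real (P i) - 2))"

end

theory Submission
  imports Defs
begin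

(* Appending a digit v < P (j+1) to a tuple shifts M by v * P_j#, and P_j# is invertible
   modulo P (j+1); so among these digits at most one makes P (j+1) divide a + M and at most one
   makes it divide a + g + M, and they are the same digit when P (j+1) divides g.  Inductively at
   least prod (P i - 2), with P i - 1 for P i dividing g, tuples survive up to index k - 2.
   With m_k = m fixed, the digit m_(k-1) < P (k-1) <= P k must avoid one residue of each of a + M,
   a + g + M modulo P (k-1) and modulo P k, leaving at least P (k-1) - 4 choices. *)

lemma prime_P: "prime (P k)"
  unfolding P_def using enumerate_in_set[OF primes_infinite] by simp

lemma P_strict_mono: "1 \<le> i \<Longrightarrow> i < j \<Longrightarrow> P i < P j"
  unfolding P_def using enumerate_mono[OF _ primes_infinite] by simp

lemma Suc_le_P: "1 \<le> i \<Longrightarrow> Suc i \<le> P i"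
proof (induction i rule: dec_induct)
  case base
  show ?case using prime_ge_2_nat[OF prime_P[of 1]] by simp
next
  case (step i)
  then show ?case using P_strict_mono[of i "Suc i"] by simp
qed

lemma primorial_Suc: "primorial (Suc j) = primorial j * P (Suc j)"
  unfolding primorial_def by (simp add: atLeastAtMostSuc_conv mult.commute)

lemma coprime_primorial_P: "j < q \<Longrightarrow> coprime (primorial j) (P q)"
  unfolding primorial_def
  by (rule prod_coprime_left) (metis P_strict_mono prime_P atLeastAtMost_iff le_less_trans primes_coprime less_irrefl)

lemma coprime_primorial_Suc_iff:
  "coprime x (primorial (Suc j)) \<longleftrightarrow> coprime x (primorial j) \<and> \<not> P (Suc j) dvd x"
  using prime_P[of "Suc j"]
  by (auto simp: primorial_Suc coprime_commute[of x] prime_imp_coprime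
      dest: coprime_absorb_left[THEN iffD1] not_prime_unit)

lemma coprime_add_mult_self_iff: "coprime (x + v * c) c \<longleftrightarrow> coprime x (c :: nat)"
  by (metis add.commute coprime_iff_gcd_eq_1 gcd.commute gcd_add_mult)

lemma card_linear_roots_le_1:
  fixes p x c n :: nat
  assumes "prime p" "coprime c p" "n \<le> p"
  shows "card {v \<in> {..<n}. p dvd x + v * c} \<le> 1"
proof -
  have "u = w" if "u \<le> w" "w < n" "p dvd x + u * c" "p dvd x + w * c" for u w
  proof -
    have "x + w * c = (x + u * c) + (w - u) * c"
      using \<open>u \<le> w\<close> by (simp add: diff_mult_distrib)
    then have "p dvd (w - u) * c"
      using that(3,4) by (metis dvd_add_right_iff)
    then have "p dvd w - u"
      using assms(2) by (metis coprime_commute coprime_dvd_mult_left_iff)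
    moreover have "w - u < p"
      using that(2) assms(3) by linarith
    ultimately show "u = w"
      using \<open>u \<le> w\<close> by (metis diff_is_0_eq dvd_imp_le le_antisym not_gr0 not_le)
  qed
  then have "u = w" if "u \<in> {v \<in> {..<n}. p dvd x + v * c}" "w \<in> {v \<in> {..<n}. p dvd x + v * c}" for u w
    using that by (metis (no_types, lifting) lessThan_iff mem_Collect_eq nat_le_linear)
  then show ?thesis
    using card_le_Suc0_iff_eq[of "{v \<in> {..<n}. p dvd x + v * c}"] by auto
qed

lemma card_avoid_linear_roots:
  fixes c n :: nat and roots :: "(nat \<times> nat) list"
  assumes "\<And>p x. (p, x) \<in> set roots \<Longrightarrow> prime p \<and> coprime c p \<and> n \<le> p"
  shows "n - length roots \<le> card {v \<in> {..<n}. \<forall>(p, x) \<in> set roots. \<not> p dvd x + v * c}"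
  using assms
proof (induction roots)
  case Nil
  then show ?case by simp
next
  case (Cons root roots)
  obtain p x where root: "root = (p, x)" by fastforce
  let ?good = "{v \<in> {..<n}. \<forall>(p, x) \<in> set roots. \<not> p dvd x + v * c}"
  let ?bad = "{v \<in> {..<n}. p dvd x + v * c}"
  have "card ?bad \<le> 1"
    using Cons.prems[of p x] by (intro card_linear_roots_le_1) (auto simp: root)
  moreover have "n - length roots \<le> card ?good"
    by (rule Cons.IH) (use Cons.prems in auto)
  ultimately have "n - length (root # roots) \<le> card ?good - card ?bad"
    by simp
  also have "\<dots> \<le> card (?good - ?bad)"
    by (rule diff_card_le_card_Diff) simp
  also have "?good - ?bad = {v \<in> {..<n}. \<forall>(p, x) \<in> set (root # roots). \<not> p dvd x + v * c}"
    by (auto simp: root)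
  finally show ?case .
qed

lemma card_fun_upd_extension_ge:
  assumes "x \<notin> I" "A \<subseteq> Pi\<^sub>E I B" "finite A" "finite (B x)" "finite T"
    and "\<And>f. f \<in> A \<Longrightarrow> V f \<subseteq> B x"
    and "\<And>f. f \<in> A \<Longrightarrow> n \<le> card (V f)"
    and "\<And>f y. f \<in> A \<Longrightarrow> y \<in> V f \<Longrightarrow> f(x := y) \<in> T"
  shows "card A * n \<le> card T"
proof -
  let ?upd = "\<lambda>(f, y). f(x := y)"
  have "inj_on ((\<lambda>(y, f). f(x := y)) \<circ> prod.swap) (Sigma A V)"
    using assms(2,6) by (intro comp_inj_on inj_on_subset[OF inj_combinator[OF assms(1)]]) (auto simp: swap_inj_on)
  moreover have "(\<lambda>(y, f). f(x := y)) \<circ> prod.swap = ?upd"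
    by (simp add: fun_eq_iff)
  ultimately have inj: "inj_on ?upd (Sigma A V)"
    by metis
  have "card A * n = (\<Sum>f\<in>A. n)"
    by simp
  also have "\<dots> \<le> (\<Sum>f\<in>A. card (V f))"
    by (rule sum_mono) (rule assms(7))
  also have "\<dots> = card (Sigma A V)"
    using assms(3,4,6) by (intro card_SigmaI[symmetric]) (auto intro: finite_subset)
  also have "\<dots> = card (?upd ` Sigma A V)"
    by (rule card_image[OF inj, symmetric])
  also have "\<dots> \<le> card T"
    using assms(5,8) by (intro card_mono) auto
  finally show ?thesis .
qed

definition offset :: "nat \<Rightarrow> (nat \<Rightarrow> nat) \<Rightarrow> nat \<Rightarrow> nat" where
  "offset l ms j = (\<Sum>i=l+1..j. ms i * primorial (i - 1))"

lemma offset_fun_upd_Suc: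
  "l \<le> j \<Longrightarrow> offset l (ms(Suc j := v)) (Suc j) = offset l ms j + v * primorial j"
  unfolding offset_def by (auto intro: sum.cong)

definition derived_pairs :: "nat \<Rightarrow> nat \<Rightarrow> nat \<Rightarrow> nat \<Rightarrow> (nat \<Rightarrow> nat) set" where
  "derived_pairs l g a j = {ms \<in> (\<Pi>\<^sub>E i\<in>{l+1..j}. {..<P i}).
     coprime (a + offset l ms j) (primorial j) \<and> coprime (a + g + offset l ms j) (primorial j)}"

lemma derived_count_eq_card_derived_pairs:
  "derived_count l k g a m = card {ms \<in> derived_pairs l g a k. ms k = m}"
  unfolding derived_count_def derived_pairs_def offset_def by (rule arg_cong[where f = card]) auto

lemma finite_derived_pairs: "finite (derived_pairs l g a j)"
  unfolding derived_pairs_def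
  by (rule finite_subset[of _ "\<Pi>\<^sub>E i\<in>{l+1..j}. {..<P i}"]) (auto intro: finite_PiE)

lemma derived_pairs_base:
  assumes "coprime a (primorial l)" "coprime (a + g) (primorial l)"
  shows "derived_pairs l g a l = {\<lambda>_. undefined}"
proof -
  have "{l+1..l} = {}"
    by simp
  then show ?thesis
    using assms unfolding derived_pairs_def offset_def by auto
qed

lemma fun_upd_in_derived_pairs:
  assumes "ms \<in> derived_pairs l g a j" "l \<le> j" "v < P (Suc j)"
    and "\<not> P (Suc j) dvd a + offset l ms j + v * primorial j"
    and "\<not> P (Suc j) dvd a + g + offset l ms j + v * primorial j"
  shows "ms(Suc j := v) \<in> derived_pairs l g a (Suc j)"
proof -
  have "ms \<in> (\<Pi>\<^sub>E i\<in>{l+1..j}. {..<P i})"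
    using assms(1) by (simp add: derived_pairs_def)
  moreover have "{l+1..Suc j} = insert (Suc j) {l+1..j}"
    using assms(2) by auto
  ultimately have "ms(Suc j := v) \<in> (\<Pi>\<^sub>E i\<in>{l+1..Suc j}. {..<P i})"
    using assms(3) by (simp add: PiE_fun_upd)
  moreover have "coprime (x + v * primorial j) (primorial (Suc j))"
    if "coprime x (primorial j)" "\<not> P (Suc j) dvd x + v * primorial j" for x
    using that by (simp add: coprime_primorial_Suc_iff coprime_add_mult_self_iff)
  then have "coprime (a + offset l ms j + v * primorial j) (primorial (Suc j))"
    and "coprime (a + g + offset l ms j + v * primorial j) (primorial (Suc j))"
    using assms(1,4,5) by (simp_all add: derived_pairs_def)
  ultimately show ?thesis
    by (simp add: derived_pairs_def offset_fun_upd_Suc[OF assms(2)] add.assoc)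
qed

definition survivors :: "nat \<Rightarrow> nat \<Rightarrow> nat" where
  "survivors g p = (if p dvd g then p - 1 else p - 2)"

lemma card_derived_pairs_Suc_ge:
  assumes "l \<le> j"
  shows "card (derived_pairs l g a j) * survivors g (P (Suc j)) \<le> card (derived_pairs l g a (Suc j))"
proof -
  define p where "p = P (Suc j)"
  define roots where "roots ms =
    (if p dvd g then [(p, a + offset l ms j)] else [(p, a + offset l ms j), (p, a + g + offset l ms j)])"
    for ms
  define V where "V ms = {v \<in> {..<p}. \<forall>(q, x) \<in> set (roots ms). \<not> q dvd x + v * primorial j}" for ms
  have avoid: "p - length (roots ms) \<le> card (V ms)" for ms
    unfolding V_def
    by (rule card_avoid_linear_roots) (auto simp: roots_def p_def prime_P coprime_primorial_P split: if_splits)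
  have card_V: "survivors g p \<le> card (V ms)" for ms
    using avoid[of ms] by (simp add: survivors_def roots_def split: if_splits)
  have extend: "ms(Suc j := v) \<in> derived_pairs l g a (Suc j)"
    if "ms \<in> derived_pairs l g a j" "v \<in> V ms" for ms v
  proof (rule fun_upd_in_derived_pairs[OF that(1) assms])
    show "\<not> P (Suc j) dvd a + g + offset l ms j + v * primorial j"
    proof (cases "p dvd g")
      case True
      have "\<not> p dvd a + offset l ms j + v * primorial j"
        using that(2) True by (simp add: V_def roots_def)
      then have "\<not> p dvd g + (a + offset l ms j + v * primorial j)"
        using True dvd_add_right_iff by blast
      then show ?thesis
        by (simp add: p_def add_ac)
    next
      case False
      then show ?thesis
        using that(2) by (simp add: V_def roots_def p_def)
    qed
  qed (use that(2) in \<open>auto simp: V_def roots_def p_def split: if_splits\<close>)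
  show ?thesis
    unfolding p_def[symmetric]
  proof (rule card_fun_upd_extension_ge[where x = "Suc j" and I = "{l+1..j}" and B = "\<lambda>i. {..<P i}"])
    show "derived_pairs l g a j \<subseteq> (\<Pi>\<^sub>E i\<in>{l+1..j}. {..<P i})"
      by (auto simp: derived_pairs_def)
    show "V ms \<subseteq> {..<P (Suc j)}" for ms
      by (auto simp: V_def p_def)
  qed (use card_V extend finite_derived_pairs in auto)
qed

lemma card_derived_pairs_ge:
  assumes "l \<le> j" "coprime a (primorial l)" "coprime (a + g) (primorial l)"
  shows "(\<Prod>i=l+1..j. survivors g (P i)) \<le> card (derived_pairs l g a j)"
  using assms(1)
proof (induction j rule: dec_induct)
  case base
  then show ?case
    using derived_pairs_base[OF assms(2,3)] by simp
next
  case (step j)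
  have "(\<Prod>i=l+1..Suc j. survivors g (P i)) = (\<Prod>i=l+1..j. survivors g (P i)) * survivors g (P (Suc j))"
    using step.hyps by simp
  also have "\<dots> \<le> card (derived_pairs l g a j) * survivors g (P (Suc j))"
    using step.IH by simp
  also have "\<dots> \<le> card (derived_pairs l g a (Suc j))"
    using step.hyps by (intro card_derived_pairs_Suc_ge) simp
  finally show ?case .
qed

lemma card_derived_pairs_last_digit_ge:
  assumes "l \<le> j" "m < P (Suc (Suc j))"
  shows "card (derived_pairs l g a j) * (P (Suc j) - 4)
    \<le> card {ms \<in> derived_pairs l g a (Suc (Suc j)). ms (Suc (Suc j)) = m}"
proof -
  define p q where "p = P (Suc j)" and "q = P (Suc (Suc j))"
  define H where "H = {ms \<in> (\<Pi>\<^sub>E i\<in>{l+1..Suc j}. {..<P i}).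
    ms(Suc (Suc j) := m) \<in> derived_pairs l g a (Suc (Suc j))}"
  define roots where "roots ms =
    [(p, a + offset l ms j), (p, a + g + offset l ms j),
     (q, a + offset l ms j + m * primorial (Suc j)), (q, a + g + offset l ms j + m * primorial (Suc j))]"
    for ms
  define V where "V ms = {v \<in> {..<p}. \<forall>(r, x) \<in> set (roots ms). \<not> r dvd x + v * primorial j}" for ms
  have "p \<le> q"
    using P_strict_mono[of "Suc j" "Suc (Suc j)"] by (simp add: p_def q_def)
  then have avoid: "p - length (roots ms) \<le> card (V ms)" for ms
    unfolding V_def
    by (intro card_avoid_linear_roots) (auto simp: roots_def p_def q_def prime_P coprime_primorial_P)
  have card_V: "p - 4 \<le> card (V ms)" for ms
    using avoid[of ms] by (simp add: roots_def numeral_eq_Suc)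
  have extend: "ms(Suc j := v) \<in> H" if "ms \<in> derived_pairs l g a j" "v \<in> V ms" for ms v
  proof -
    have ms': "ms(Suc j := v) \<in> derived_pairs l g a (Suc j)"
      by (rule fun_upd_in_derived_pairs[OF that(1) assms(1)])
        (use that(2) in \<open>auto simp: V_def roots_def p_def\<close>)
    have "ms(Suc j := v, Suc (Suc j) := m) \<in> derived_pairs l g a (Suc (Suc j))"
      by (rule fun_upd_in_derived_pairs[OF ms'])
        (use assms that(2) in \<open>auto simp: V_def roots_def q_def offset_fun_upd_Suc add_ac\<close>)
    then show ?thesis
      using ms' by (auto simp: H_def derived_pairs_def)
  qed
  have "card (derived_pairs l g a j) * (p - 4) \<le> card H"
  proof (rule card_fun_upd_extension_ge[where x = "Suc j" and I = "{l+1..j}" and B = "\<lambda>i. {..<P i}"])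
    show "derived_pairs l g a j \<subseteq> (\<Pi>\<^sub>E i\<in>{l+1..j}. {..<P i})"
      by (auto simp: derived_pairs_def)
    show "V ms \<subseteq> {..<P (Suc j)}" for ms
      by (auto simp: V_def p_def)
    show "finite H"
      unfolding H_def by (rule finite_subset[of _ "\<Pi>\<^sub>E i\<in>{l+1..Suc j}. {..<P i}"]) (auto intro: finite_PiE)
  qed (use card_V extend finite_derived_pairs in auto)
  also have "card H \<le> card {ms \<in> derived_pairs l g a (Suc (Suc j)). ms (Suc (Suc j)) = m}"
  proof (rule card_inj_on_le)
    have "inj_on (\<lambda>(y, ms). ms(Suc (Suc j) := y)) ({..<P (Suc (Suc j))} \<times> (\<Pi>\<^sub>E i\<in>{l+1..Suc j}. {..<P i}))"
      by (rule inj_combinator) simp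
    then show "inj_on (\<lambda>ms. ms(Suc (Suc j) := m)) H"
      using assms(2) by (auto simp: H_def inj_on_def)
    show "(\<lambda>ms. ms(Suc (Suc j) := m)) ` H \<subseteq> {ms \<in> derived_pairs l g a (Suc (Suc j)). ms (Suc (Suc j)) = m}"
      by (auto simp: H_def)
  qed (simp add: finite_derived_pairs)
  finally show ?thesis
    unfolding p_def .
qed

lemma nring_eq_prod_survivors:
  assumes "1 \<le> l"
  shows "nring l g j = real (\<Prod>i=l+1..j. survivors g (P i))"
proof -
  let ?ratio = "\<lambda>i. (real (P i) - 1) / (real (P i) - 2)"
  have "{i. l+1 \<le> i \<and> i \<le> j \<and> P i dvd g} = {i \<in> {l+1..j}. P i dvd g}"
    by auto
  then have "nring l g j = (\<Prod>i=l+1..j. real (P i) - 2) * (\<Prod>i=l+1..j. if P i dvd g then ?ratio i else 1)"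
    unfolding nring_def by (simp only: prod.inter_filter[OF finite_atLeastAtMost])
  also have "\<dots> = (\<Prod>i=l+1..j. real (survivors g (P i)))"
    unfolding prod.distrib[symmetric]
  proof (rule prod.cong)
    fix i
    assume "i \<in> {l+1..j}"
    then have "3 \<le> P i"
      using assms Suc_le_P[of i] by simp
    then show "(real (P i) - 2) * (if P i dvd g then ?ratio i else 1) = real (survivors g (P i))"
      by (auto simp: survivors_def of_nat_diff)
  qed simp
  finally show ?thesis
    by simp
qed

theorem theorem2:
  fixes l k g a m :: nat
  assumes "0 < g" and "1 \<le> l"
    and "consec_pair l g a"
    and "k > l + 2"
    and "m \<le> P k - 1"
  shows "real (derived_count l k g a m) \<ge> nring l g (k - 2) * (real (P (k - 1)) - 4)"
proof -
  define j where "j = k - 2"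
  have k: "k = Suc (Suc j)" and "l < j"
    using assms(4) by (auto simp: j_def)
  have "coprime a (primorial l)" "coprime (a + g) (primorial l)"
    using assms(3) by (simp_all add: consec_pair_def prospective_def)
  then have "(\<Prod>i=l+1..j. survivors g (P i)) * (P (Suc j) - 4) \<le> card (derived_pairs l g a j) * (P (Suc j) - 4)"
    using \<open>l < j\<close> by (intro mult_right_mono card_derived_pairs_ge) simp_all
  also have "\<dots> \<le> derived_count l k g a m"
    unfolding derived_count_eq_card_derived_pairs k
    using \<open>l < j\<close> assms(5) prime_ge_2_nat[OF prime_P[of k]]
    by (intro card_derived_pairs_last_digit_ge) (simp_all add: k)
  finally have count: "(\<Prod>i=l+1..j. survivors g (P i)) * (P (Suc j) - 4) \<le> derived_count l k g a m" .
  have "4 \<le> P (Suc j)"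
    using Suc_le_P[of "Suc j"] \<open>l < j\<close> assms(2) by simp
  then have "nring l g (k - 2) * (real (P (k - 1)) - 4) = real ((\<Prod>i=l+1..j. survivors g (P i)) * (P (Suc j) - 4))"
    by (simp add: nring_eq_prod_survivors[OF assms(2)] k of_nat_diff)
  also have "\<dots> \<le> real (derived_count l k g a m)"
    using count by (rule of_nat_mono)
  finally show ?thesis .
qed

end
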